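(* Let $d\ge1$ and let $\mathcal{P}$ be a $d$-partition of $\mathbb{Z}^n$ that is invariant under the action of $\mathbb{Z}^n$. Then every block $S\in\mathcal{P}$ is either $d$-sparse or a non-trivial affine sublattice of $\mathbb{Z}^n$, i.e. $S=\mathbf v+L$ for some $\mathbf v\in\mathbb{Z}^n$ and some sublattice $L$ with $\{\mathbf 0\}\subsetneq L\subsetneq\mathbb{Z}^n$.
   Context: A $d$-partition of a set $E$ ($|E|\ge d+1$) is a collection $\mathcal P$ of subsets of $E$ (blocks) with $|\mathcal P|\ge2$, every block of size $\ge d$, and every $d$-element subset of $E$ contained in exactly one block. $\mathbb{Z}^n$ acts on subsets by $\mathbf u+S=\{\mathbf u+\mathbf v:\mathbf v\in S\}$ and on collections of subsets by $\mathbf u+\mathcal P=\{\mathbf u+S:S\in\mathcal P\}$; $\mathcal P$ is invariant if $\mathbf u+\mathcal P=\mathcal P$ for all $\mathbf u\in\mathbb{Z}^n$. A subset $S\subset\mathbb{Z}^n$ is $d$-sparse if there is no $\mathbf u\in\mathbb{Z}^n\setminus\{\mathbf 0\}$ with $|S\cap(\mathbf u+S)|\ge d$. *)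

theory Defs
  imports "HOL-Analysis.Analysis"
begin

text \<open>Z^n is rendered as \<open>int ^ 'n\<close> for a finite index type \<open>'n\<close>.\<close>

definition card_ge :: "'a set \<Rightarrow> nat \<Rightarrow> bool" where
  "card_ge A k \<longleftrightarrow> infinite A \<or> k \<le> card A"

definition d_partition :: "nat \<Rightarrow> 'a set \<Rightarrow> 'a set set \<Rightarrow> bool" where
  "d_partition d E P \<longleftrightarrow>
     card_ge E (d + 1) \<and>
     (\<forall>S\<in>P. S \<subseteq> E) \<and>
     (\<exists>A\<in>P. \<exists>B\<in>P. A \<noteq> B) \<and>
     (\<forall>S\<in>P. card_ge S d) \<and>
     (\<forall>T. T \<subseteq> E \<and> finite T \<and> card T = d \<longrightarrow> (\<exists>!S. S \<in> P \<and> T \<subseteq> S))"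

definition shift :: "'a::plus \<Rightarrow> 'a set \<Rightarrow> 'a set" where
  "shift u S = (\<lambda>v. u + v) ` S"

definition invariant_partition :: "('a::plus) set set \<Rightarrow> bool" where
  "invariant_partition P \<longleftrightarrow> (\<forall>u. shift u ` P = P)"

definition d_sparse :: "nat \<Rightarrow> ('a::{plus,zero}) set \<Rightarrow> bool" where
  "d_sparse d S \<longleftrightarrow> \<not> (\<exists>u. u \<noteq> 0 \<and> card_ge (S \<inter> shift u S) d)"

definition sublattice :: "('a::ab_group_add) set \<Rightarrow> bool" where
  "sublattice L \<longleftrightarrow> 0 \<in> L \<and> (\<forall>x\<in>L. \<forall>y\<in>L. x - y \<in> L)"

end

theory Submission
  imports Defs
begin

text \<open>A block S that meets some translate u + S, u \<noteq> 0, in at least d points equals it,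
  because u + S is again a block. Then S is invariant under u, so for any a, b \<in> S the
  translate (b - a) + S shares with S the whole infinite progression b + k u, k \<in> \<nat>;
  hence (b - a) + S = S as well. Thus S - s is a subgroup for s \<in> S; it contains u \<noteq> 0,
  and it is not all of Z^n because a d-partition has at least two blocks.\<close>

lemma mem_shift_iff: "x \<in> shift u S \<longleftrightarrow> x - u \<in> (S :: 'a::ab_group_add set)"
  by (force simp: shift_def)

lemma shift_shift: "shift u (shift w S) = shift (u + w) (S :: 'a::ab_group_add set)"
  by (auto simp: mem_shift_iff algebra_simps)

lemma shift_0 [simp]: "shift 0 S = (S :: 'a::ab_group_add set)"
  by (simp add: mem_shift_iff set_eq_iff)

lemma shift_UNIV [simp]: "shift u (UNIV :: 'a::ab_group_add set) = UNIV"
  by (simp add: mem_shift_iff set_eq_iff)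

lemma card_ge_obtain_subset:
  assumes "card_ge X d"
  obtains T where "T \<subseteq> X" "finite T" "card T = d"
proof (cases "finite X")
  case True
  then show ?thesis
    using assms obtain_subset_with_card_n[of d X] that unfolding card_ge_def by blast
next
  case False
  then show ?thesis using infinite_arbitrarily_large[of X d] that by blast
qed

lemma card_ge_nonempty: "card_ge X d \<Longrightarrow> d \<ge> 1 \<Longrightarrow> X \<noteq> {}"
  by (auto simp: card_ge_def)

lemma d_partition_block_eq:
  assumes "d_partition d E P" "A \<in> P" "B \<in> P" "card_ge (A \<inter> B) d"
  shows "A = B"
proof -
  obtain T where T: "T \<subseteq> A \<inter> B" "finite T" "card T = d"
    using card_ge_obtain_subset[OF assms(4)] .
  have "T \<subseteq> E" using T(1) assms(1,2) unfolding d_partition_def by blast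
  then have "\<exists>!S. S \<in> P \<and> T \<subseteq> S" using assms(1) T(2,3) unfolding d_partition_def by simp
  moreover have "A \<in> P \<and> T \<subseteq> A" "B \<in> P \<and> T \<subseteq> B" using T(1) assms(2,3) by auto
  ultimately show ?thesis by (metis Ex1_def)
qed

lemma d_partition_block_neq_carrier:
  assumes "d_partition d E P" "S \<in> P"
  shows "S \<noteq> E"
proof
  assume "S = E"
  have "A = S" if "A \<in> P" for A
  proof (rule d_partition_block_eq[OF assms(1) that assms(2)])
    have "A \<subseteq> E" "card_ge A d" using assms(1) that unfolding d_partition_def by simp_all
    then show "card_ge (A \<inter> S) d" using \<open>S = E\<close> by (simp add: Int_absorb2)
  qed
  moreover obtain A B where "A \<in> P" "B \<in> P" "A \<noteq> B"
    using assms(1) unfolding d_partition_def by auto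
  ultimately show False by metis
qed

lemma invariant_partition_shift_mem: "invariant_partition P \<Longrightarrow> S \<in> P \<Longrightarrow> shift u S \<in> P"
  unfolding invariant_partition_def by blast

lemma periodic_set_progression_mem:
  fixes S :: "(int ^ 'n) set"
  assumes "shift u S = S" "b \<in> S"
  shows "b + of_nat k *s u \<in> S"
proof (induction k)
  case 0
  then show ?case using assms(2) by simp
next
  case (Suc k)
  have "(b + of_nat (Suc k) *s u) - u = b + of_nat k *s u"
    by (simp add: vec_eq_iff algebra_simps)
  then show ?case using Suc assms(1) by (metis mem_shift_iff)
qed

lemma infinite_progression:
  fixes u b :: "int ^ 'n"
  assumes "u \<noteq> 0"
  shows "infinite (range (\<lambda>k::nat. b + of_nat k *s u))"
proof -
  obtain i where i: "u $ i \<noteq> 0" using assms by (metis vec_eq_iff zero_index)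
  have "inj (\<lambda>k::nat. b + of_nat k *s u)"
  proof (rule injI)
    fix k m :: nat
    assume "b + of_nat k *s u = b + of_nat m *s u"
    then have "(of_nat k *s u) $ i = (of_nat m *s u) $ i" by simp
    then have "int k * u $ i = int m * u $ i" by simp
    then show "k = m" using i by simp
  qed
  then show ?thesis using range_inj_infinite by blast
qed

lemma periodic_set_infinite_overlap:
  fixes S :: "(int ^ 'n) set"
  assumes "shift u S = S" "u \<noteq> 0" "a \<in> S" "b \<in> S"
  shows "infinite (S \<inter> shift (b - a) S)"
proof -
  have "range (\<lambda>k::nat. b + of_nat k *s u) \<subseteq> S \<inter> shift (b - a) S"
  proof clarify
    fix k :: nat
    have "(b + of_nat k *s u) - (b - a) = a + of_nat k *s u" by (simp add: algebra_simps)
    then show "b + of_nat k *s u \<in> S \<inter> shift (b - a) S"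
      using periodic_set_progression_mem[OF assms(1) assms(3), of k]
        periodic_set_progression_mem[OF assms(1) assms(4), of k]
      by (simp only: mem_shift_iff IntI)
  qed
  then show ?thesis using infinite_progression[OF assms(2)] by (rule infinite_super)
qed

lemma sublattice_shift_neg:
  fixes S :: "'a::ab_group_add set"
  assumes "s \<in> S" and stable: "\<And>a b. a \<in> S \<Longrightarrow> b \<in> S \<Longrightarrow> shift (b - a) S = S"
  shows "sublattice (shift (- s) S)"
  unfolding sublattice_def
proof (intro conjI ballI)
  show "0 \<in> shift (- s) S" using assms(1) by (simp add: mem_shift_iff)
  fix x y
  assume "x \<in> shift (- s) S" "y \<in> shift (- s) S"
  then have "shift ((y + s) - (x + s)) S = S" by (intro stable) (simp_all add: mem_shift_iff)
  then have "s \<in> shift ((y + s) - (x + s)) S" using assms(1) by simp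
  then show "x - y \<in> shift (- s) S" by (simp add: mem_shift_iff algebra_simps)
qed

theorem mainTheorem4:
  fixes d :: nat and P :: "(int ^ 'n) set set"
  assumes "d \<ge> 1"
    and "d_partition d (UNIV :: (int ^ 'n) set) P"
    and "invariant_partition P"
    and "S \<in> P"
  shows "d_sparse d S \<or>
         (\<exists>v L. sublattice L \<and> {0} \<subset> L \<and> L \<subset> UNIV \<and> S = shift v L)"
proof (cases "d_sparse d S")
  case False
  then obtain u where u: "u \<noteq> 0" "card_ge (S \<inter> shift u S) d"
    unfolding d_sparse_def by blast
  have block_eq: "shift w S = S" if "card_ge (S \<inter> shift w S) d" for w
    using d_partition_block_eq[OF assms(2,4) invariant_partition_shift_mem[OF assms(3,4)] that]
    by (rule sym)
  have periodic: "shift u S = S" using block_eq u(2) .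
  have stable: "shift (b - a) S = S" if "a \<in> S" "b \<in> S" for a b
    using periodic_set_infinite_overlap[OF periodic u(1) that]
    by (intro block_eq) (simp add: card_ge_def)
  have "card_ge S d" using assms(2,4) unfolding d_partition_def by simp
  then obtain s where s: "s \<in> S" using card_ge_nonempty assms(1) by blast
  define L where "L = shift (- s) S"
  have S_eq: "S = shift s L" by (simp add: L_def shift_shift)
  have "sublattice L" unfolding L_def using s stable by (rule sublattice_shift_neg)
  moreover have "{0} \<subset> L"
  proof -
    have "u + s \<in> shift u S" using s by (simp add: mem_shift_iff)
    then have "u \<in> L" using periodic by (simp add: L_def mem_shift_iff)
    moreover have "0 \<in> L" using s by (simp add: L_def mem_shift_iff)
    ultimately show ?thesis using u(1) by blast
  qed
  moreover have "L \<noteq> UNIV"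
    using S_eq d_partition_block_neq_carrier[OF assms(2,4)] by (metis shift_UNIV)
  ultimately show ?thesis using S_eq by blast
qed simp

end
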